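(* Identify $\mathbb{R}^2$ with $\mathbb{C}$. Let $x,y\in\mathbb{B}^2$ and put $\xi=\frac{x+y}{|x+y|}$ if $x+y\ne0$ and $\xi=e_1=1$ if $x+y=0$; put $\zeta=i\xi$. Define $$x'=\tfrac{x+y}{2}-\tfrac{|x-y|}{2}\xi,\quad y'=\tfrac{x+y}{2}+\tfrac{|x-y|}{2}\xi,\quad x''=\tfrac{x+y}{2}-\tfrac{|x-y|}{2}\zeta,\quad y''=\tfrac{x+y}{2}+\tfrac{|x-y|}{2}\zeta,$$ and assume $x',y'\in\mathbb{B}^2$. Then $x'',y''\in\mathbb{B}^2$ and $$\tilde\tau_{\mathbb{B}^2}(x'',y'')\le\tilde\tau_{\mathbb{B}^2}(x,y)\le\tilde\tau_{\mathbb{B}^2}(x',y').$$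
   Context: $\mathbb{B}^2$ is the open unit disk. For a proper subdomain $D\subsetneq\mathbb{R}^n$ and $x,y\in D$, $\tilde\tau_D(x,y)=\log\big(1+\sup_{p\in\partial D}\frac{|x-y|}{\sqrt{|x-p||y-p|}}\big)$ (the scale invariant Cassinian metric). *)

theory Defs
  imports "HOL-Analysis.Analysis"
begin

definition sic_metric :: "complex set \<Rightarrow> complex \<Rightarrow> complex \<Rightarrow> real" where
  "sic_metric D x y =
     ln (1 + (SUP p\<in>frontier D. cmod (x - y) / sqrt (cmod (x - p) * cmod (y - p))))"

end

theory Submission
  imports Defs
begin

text \<open>Write \<open>x, y = m \<mp> w\<close> with \<open>m = (x + y)/2\<close> and \<open>|w| = d = |x - y|/2\<close>. For every pair
  \<open>m \<mp> u\<close> with \<open>|u| = d\<close> the numerator \<open>|x - y| = 2d\<close> is the same, and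
  \<open>|x - p| |y - p| = |(p - m)\<^sup>2 - u\<^sup>2|\<close>, so the metric only depends on the minimum of this product
  over the unit circle, and decreases as the minimum grows. After a rotation \<open>m = r \<ge> 0\<close>.
  For the radial pair \<open>u = d\<close> the minimum is \<open>(1 - r)\<^sup>2 - d\<^sup>2\<close>, attained at \<open>p = 1\<close>, and by the
  triangle inequality this bounds the product from below for every \<open>u\<close>. For the tangential pair
  \<open>u = i d\<close> and any \<open>p\<close> on the circle, the product for an arbitrary \<open>u\<close> is no larger than the
  tangential one at \<open>p\<close> when evaluated at \<open>p\<close>, at its conjugate, or at the point where the ray from
  \<open>r\<close> in the direction \<open>\<plusminus>u/d\<close> meets the circle.\<close>

definition cassini_ratio :: "complex \<Rightarrow> complex \<Rightarrow> complex \<Rightarrow> real" where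
  "cassini_ratio x y p = cmod (x - y) / sqrt (cmod (x - p) * cmod (y - p))"

lemma sic_metric_ball_eq:
  "sic_metric (ball 0 1) x y = ln (1 + (SUP p\<in>sphere 0 1. cassini_ratio x y p))"
  unfolding sic_metric_def cassini_ratio_def by simp

lemma dist_product_ball_sphere_ge:
  assumes "x \<in> ball 0 1" "y \<in> ball 0 1" "cmod p = 1"
  shows "(1 - cmod x) * (1 - cmod y) \<le> cmod (x - p) * cmod (y - p)"
proof (rule mult_mono)
  show "1 - cmod x \<le> cmod (x - p)" "1 - cmod y \<le> cmod (y - p)"
    using norm_triangle_ineq2[of p x] norm_triangle_ineq2[of p y] assms(3)
    by (simp_all add: norm_minus_commute)
qed (use assms in auto)

lemma bdd_above_cassini_ratio:
  assumes "x \<in> ball 0 1" "y \<in> ball 0 1"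
  shows "bdd_above (cassini_ratio x y ` sphere 0 1)"
proof (rule bdd_aboveI2)
  fix p :: complex
  assume "p \<in> sphere 0 1"
  then have "(1 - cmod x) * (1 - cmod y) \<le> cmod (x - p) * cmod (y - p)"
    using dist_product_ball_sphere_ge[OF assms] by simp
  moreover have "0 < (1 - cmod x) * (1 - cmod y)"
    using assms by simp
  ultimately show "cassini_ratio x y p \<le> cmod (x - y) / sqrt ((1 - cmod x) * (1 - cmod y))"
    unfolding cassini_ratio_def by (intro divide_left_mono real_sqrt_le_mono) auto
qed

lemma sic_metric_ball_le:
  assumes ab: "a \<in> ball 0 1" "b \<in> ball 0 1"
    and num: "cmod (a' - b') \<le> cmod (a - b)"
    and closer: "\<And>p. cmod p = 1 \<Longrightarrow>
      \<exists>q. cmod q = 1 \<and> cmod (a - q) * cmod (b - q) \<le> cmod (a' - p) * cmod (b' - p)"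
  shows "sic_metric (ball 0 1) a' b' \<le> sic_metric (ball 0 1) a b"
proof -
  define S where "S = (SUP q\<in>sphere 0 1. cassini_ratio a b q)"
  have le_S: "cassini_ratio a' b' p \<le> S" if p: "cmod p = 1" for p
  proof -
    obtain q where q: "cmod q = 1"
      and prod: "cmod (a - q) * cmod (b - q) \<le> cmod (a' - p) * cmod (b' - p)"
      using closer[OF p] by blast
    have "a \<noteq> q" "b \<noteq> q"
      using ab q by auto
    then have "cassini_ratio a' b' p \<le> cassini_ratio a b q"
      unfolding cassini_ratio_def using num prod by (intro frac_le real_sqrt_le_mono) auto
    also have "\<dots> \<le> S"
      unfolding S_def using bdd_above_cassini_ratio[OF ab] q by (intro cSUP_upper) auto
    finally show ?thesis .
  qed
  have bdd: "bdd_above (cassini_ratio a' b' ` sphere 0 1)"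
    using le_S by (intro bdd_aboveI2) auto
  have "0 \<le> cassini_ratio a' b' 1"
    by (simp add: cassini_ratio_def)
  also have "\<dots> \<le> (SUP p\<in>sphere 0 1. cassini_ratio a' b' p)"
    using bdd by (intro cSUP_upper) auto
  finally have "0 \<le> (SUP p\<in>sphere 0 1. cassini_ratio a' b' p)" .
  moreover have "(SUP p\<in>sphere 0 1. cassini_ratio a' b' p) \<le> S"
    using le_S by (intro cSUP_least) auto
  ultimately show ?thesis
    unfolding sic_metric_ball_eq S_def by (intro ln_mono) auto
qed

lemma sic_metric_ball_rotate:
  assumes "cmod \<xi> = 1"
  shows "sic_metric (ball 0 1) (\<xi> * x) (\<xi> * y) = sic_metric (ball 0 1) x y"
proof -
  have "\<xi> * cnj \<xi> = 1"
    using assms complex_norm_square[of \<xi>] by simp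
  have sphere: "(*) \<xi> ` sphere 0 1 = sphere 0 1"
  proof
    show "sphere 0 1 \<subseteq> (*) \<xi> ` sphere 0 1"
    proof
      fix p :: complex
      assume p: "p \<in> sphere 0 1"
      have "p = \<xi> * (cnj \<xi> * p)"
        using \<open>\<xi> * cnj \<xi> = 1\<close> by (simp add: mult.assoc[symmetric])
      moreover have "cnj \<xi> * p \<in> sphere 0 1"
        using p assms by (simp add: norm_mult)
      ultimately show "p \<in> (*) \<xi> ` sphere 0 1"
        by (rule image_eqI)
    qed
  qed (use assms in \<open>auto simp: norm_mult\<close>)
  have "cassini_ratio (\<xi> * x) (\<xi> * y) (\<xi> * p) = cassini_ratio x y p" for p
    unfolding cassini_ratio_def using assms by (simp add: right_diff_distrib[symmetric] norm_mult)
  then have "(SUP p\<in>(*) \<xi> ` sphere 0 1. cassini_ratio (\<xi> * x) (\<xi> * y) p)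
      = (SUP p\<in>sphere 0 1. cassini_ratio x y p)"
    by (simp add: image_comp)
  then show ?thesis
    by (simp only: sic_metric_ball_eq sphere)
qed

lemma dist_product_eq_norm_square_diff:
  fixes m u p :: complex
  shows "cmod (m - u - p) * cmod (m + u - p) = cmod ((p - m)^2 - u^2)"
proof -
  have "(m - u - p) * (m + u - p) = (p - m)^2 - u^2"
    by (simp add: power2_eq_square algebra_simps)
  then show ?thesis
    by (metis norm_mult)
qed

lemma dist_product_sphere_ge:
  fixes m u p :: complex and d :: real
  assumes "cmod p = 1" "cmod u = d" "cmod m + d \<le> 1"
  shows "(1 - cmod m)^2 - d^2 \<le> cmod ((p - m)^2 - u^2)"
proof -
  have "1 - cmod m \<le> cmod (p - m)"
    using norm_triangle_ineq2[of p m] assms(1) by simp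
  moreover have "0 \<le> 1 - cmod m"
    using assms(2,3) norm_ge_zero[of u] by linarith
  ultimately have "(1 - cmod m)^2 \<le> cmod (p - m)^2"
    by (rule power_mono)
  moreover have "cmod ((p - m)^2) - cmod (u^2) \<le> cmod ((p - m)^2 - u^2)"
    by (rule norm_triangle_ineq2)
  ultimately show ?thesis
    using assms(2) by (simp add: norm_power)
qed

lemma disc_cap_quadratic_nonneg:
  fixes X Y a b t :: real
  assumes a: "0 \<le> a" "a^2 + b^2 = 1" and cap: "t * a < X" "X^2 + Y^2 \<le> t^2" and t: "0 < t"
  shows "0 \<le> a * (X^2 - Y^2) + 2 * \<bar>X\<bar> * \<bar>Y\<bar> * \<bar>b\<bar>"
  \<comment> \<open>With \<open>X + i|Y| = \<rho> exp (i\<phi>)\<close> and \<open>a + i|b| = exp (i\<psi>)\<close> the right-hand side is \<open>\<rho>\<^sup>2 cos (2\<phi> - \<psi>)\<close>,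
    and the hypotheses force \<open>0 \<le> \<phi> \<le> \<psi> \<le> \<pi>/2\<close>.\<close>
proof -
  have ta: "0 \<le> t * a"
    using a t by simp
  then have X: "0 < X"
    using cap by linarith
  have "(t * a)^2 < X^2"
    using ta cap by (simp add: power_strict_mono)
  moreover have "t^2 * b^2 = t^2 - (t * a)^2"
  proof -
    have "b^2 = 1 - a^2"
      using a(2) by simp
    then show ?thesis
      by (simp add: power_mult_distrib right_diff_distrib)
  qed
  ultimately have "\<bar>Y\<bar>^2 < (t * \<bar>b\<bar>)^2"
    using cap(2) by (simp add: power_mult_distrib)
  moreover have "0 \<le> t * \<bar>b\<bar>"
    using t by simp
  ultimately have Yb: "\<bar>Y\<bar> \<le> t * \<bar>b\<bar>"
    by (rule power2_less_imp_less[THEN less_imp_le])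
  have "t * a * Y^2 \<le> X * Y^2"
    using cap by (simp add: mult_right_mono)
  moreover have "X * Y^2 \<le> X * \<bar>Y\<bar> * (t * \<bar>b\<bar>)"
  proof -
    have "X * Y^2 = X * \<bar>Y\<bar> * \<bar>Y\<bar>"
      by (simp add: power2_eq_square abs_mult_self_eq)
    also have "\<dots> \<le> X * \<bar>Y\<bar> * (t * \<bar>b\<bar>)"
      using X Yb by (intro mult_left_mono) auto
    finally show ?thesis .
  qed
  moreover have "0 \<le> t * a * X^2" "0 \<le> X * Y^2"
    using ta X by simp_all
  moreover have "t * (a * (X^2 - Y^2) + 2 * \<bar>X\<bar> * \<bar>Y\<bar> * \<bar>b\<bar>)
      = t * a * X^2 - t * a * Y^2 + 2 * (X * \<bar>Y\<bar> * (t * \<bar>b\<bar>))"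
    using X by (simp add: algebra_simps)
  ultimately have "0 \<le> t * (a * (X^2 - Y^2) + 2 * \<bar>X\<bar> * \<bar>Y\<bar> * \<bar>b\<bar>)"
    by linarith
  then show ?thesis
    using t by (simp add: zero_le_mult_iff)
qed

lemma norm_sq_add_minus_norm_sq_diff_eq:
  fixes z e :: complex and d :: real
  assumes "cmod e = 1"
  shows "cmod (z^2 + of_real (d^2))^2 - cmod (z^2 - (of_real d * e)^2)^2
    = 4 * d^2 * Re e * (Re e * ((Re z)^2 - (Im z)^2) + 2 * (Re z * Im z * Im e))"
proof -
  have e: "(Re e)^2 + (Im e)^2 = 1"
    using assms by (simp add: cmod_power2[symmetric])
  show ?thesis
    unfolding cmod_power2 using e by (simp add: power2_eq_square algebra_simps) algebra
qed

lemma norm_sphere_diff_real_sq: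
  fixes q :: complex and r :: real
  assumes "cmod q = 1"
  shows "cmod (q - of_real r)^2 = 1 + r^2 - 2 * r * Re q"
proof -
  have "(Re q)^2 + (Im q)^2 = 1"
    using assms by (simp add: cmod_power2[symmetric])
  then show ?thesis
    unfolding cmod_power2 by (simp add: power2_eq_square algebra_simps)
qed

lemma exists_unit_Re_nonneg_power2_eq:
  fixes v :: complex
  shows "\<exists>e. cmod e = 1 \<and> 0 \<le> Re e \<and> v^2 = (of_real (cmod v) * e)^2"
proof (cases "v = 0")
  case False
  define e where "e = (if 0 \<le> Re v then v / of_real (cmod v) else - v / of_real (cmod v))"
  show ?thesis
    using False by (intro exI[of _ e]) (auto simp: e_def norm_divide power2_eq_square divide_le_0_iff)
qed (intro exI[of _ 1], simp)

lemma exists_ray_sphere_intersection: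
  fixes c e :: complex
  assumes "cmod c \<le> 1" "cmod e = 1"
  shows "\<exists>t\<ge>1 - cmod c. cmod (c + of_real t * e) = 1"
proof -
  have "\<exists>t. 0 \<le> t \<and> t \<le> 2 \<and> cmod (c + of_real t * e) = 1"
  proof (rule IVT')
    show "1 \<le> cmod (c + of_real 2 * e)"
      using norm_diff_ineq[of "of_real 2 * e" c] assms by (simp add: norm_mult add.commute)
  qed (use assms in \<open>auto intro!: continuous_intros\<close>)
  then obtain t where "cmod (c + of_real t * e) = 1" "0 \<le> t"
    by blast
  moreover have "cmod (c + of_real t * e) \<le> cmod c + t"
    using norm_triangle_ineq[of c "of_real t * e"] assms(2) \<open>0 \<le> t\<close> by (simp add: norm_mult)
  ultimately show ?thesis
    by (intro exI[of _ t]) auto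
qed

lemma exists_conj_norm_square_diff_le:
  fixes z e :: complex and d :: real
  assumes e: "cmod e = 1" "0 \<le> Re e"
    and nonneg: "0 \<le> Re e * ((Re z)^2 - (Im z)^2) + 2 * \<bar>Re z\<bar> * \<bar>Im z\<bar> * \<bar>Im e\<bar>"
  shows "\<exists>w\<in>{z, cnj z}. cmod (w^2 - (of_real d * e)^2) \<le> cmod (z^2 + of_real (d^2))"
proof -
  define w where "w = (if 0 \<le> Re z * Im z * Im e then z else cnj z)"
  have w: "Re w = Re z" "(Im w)^2 = (Im z)^2" "Re w * Im w * Im e = \<bar>Re z\<bar> * \<bar>Im z\<bar> * \<bar>Im e\<bar>"
    by (auto simp: w_def abs_mult[symmetric])
  have same: "cmod (w^2 + of_real (d^2)) = cmod (z^2 + of_real (d^2))"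
  proof (cases "w = z")
    case False
    then have "w^2 + of_real (d^2) = cnj (z^2 + of_real (d^2))"
      by (simp add: w_def split: if_splits)
    then show ?thesis
      by (simp only: complex_mod_cnj)
  qed simp
  have "0 \<le> 4 * d^2 * Re e * (Re e * ((Re z)^2 - (Im z)^2) + 2 * (\<bar>Re z\<bar> * \<bar>Im z\<bar> * \<bar>Im e\<bar>))"
    using e(2) nonneg by (simp add: mult.assoc)
  also have "\<dots> = 4 * d^2 * Re e * (Re e * ((Re w)^2 - (Im w)^2) + 2 * (Re w * Im w * Im e))"
    by (simp only: w(2,3), simp only: w(1))
  also have "\<dots> = cmod (w^2 + of_real (d^2))^2 - cmod (w^2 - (of_real d * e)^2)^2"
    by (rule norm_sq_add_minus_norm_sq_diff_eq[OF e(1), symmetric])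
  finally have "cmod (w^2 - (of_real d * e)^2)^2 \<le> cmod (w^2 + of_real (d^2))^2"
    by simp
  then have "cmod (w^2 - (of_real d * e)^2) \<le> cmod (z^2 + of_real (d^2))"
    unfolding same[symmetric] by (rule power2_le_imp_le) simp
  moreover have "w \<in> {z, cnj z}"
    by (simp add: w_def)
  ultimately show ?thesis
    by blast
qed

lemma exists_sphere_norm_square_diff_le:
  fixes r d :: real and v p :: complex
  assumes r: "0 \<le> r" "r + d < 1" and v: "cmod v = d" and p: "cmod p = 1"
  shows "\<exists>q. cmod q = 1 \<and>
    cmod ((q - of_real r)^2 - v^2) \<le> cmod ((p - of_real r)^2 + of_real (d^2))"
proof -
  have d: "0 \<le> d"
    using v by auto
  obtain e where e: "cmod e = 1" "0 \<le> Re e" "v^2 = (of_real d * e)^2"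
    using exists_unit_Re_nonneg_power2_eq[of v] v by blast
  obtain t where t: "1 - r \<le> t" "cmod (of_real r + of_real t * e) = 1"
    using exists_ray_sphere_intersection[of "of_real r" e] r d e(1) by auto
  define c where "c = of_real r + of_real t * e"
  have c: "cmod c = 1" "cmod (c - of_real r) = t" "Re c = r + t * Re e"
    using t r d e(1) by (simp_all add: c_def norm_mult)
  have "d < t"
    using r t by linarith
  have dist_p: "cmod (p - of_real r)^2 - t^2 = 2 * r * (Re c - Re p)"
    using norm_sphere_diff_real_sq[OF c(1), of r] norm_sphere_diff_real_sq[OF p, of r] c(2)
    by (simp add: algebra_simps)
  consider (far) "Re p \<le> Re c" | (near) "Re c < Re p"
    by linarith
  then show ?thesis
  proof cases
    case far
    have "(c - of_real r)^2 - v^2 = of_real (t^2 - d^2) * e^2"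
      unfolding e(3) by (simp add: c_def power2_eq_square algebra_simps)
    moreover have "d^2 \<le> t^2"
      using \<open>d < t\<close> d by (simp add: power_mono)
    ultimately have "cmod ((c - of_real r)^2 - v^2) = t^2 - d^2"
      using e(1) by (simp add: norm_mult norm_power del: of_real_diff of_real_power)
    also have "\<dots> \<le> cmod (p - of_real r)^2 - d^2"
    proof -
      have "0 \<le> 2 * r * (Re c - Re p)"
        using far r(1) by simp
      then show ?thesis
        using dist_p by linarith
    qed
    also have "\<dots> \<le> cmod ((p - of_real r)^2 + of_real (d^2))"
      using norm_diff_ineq[of "(p - of_real r)^2" "of_real (d^2)"] by (simp add: norm_power)
    finally show ?thesis
      using c(1) by blast
  next
    case near
    define z where "z = p - of_real r"
    have "2 * r * (Re c - Re p) \<le> 0"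
      using near r(1) by (simp add: mult_nonneg_nonpos)
    moreover have "(Re z)^2 + (Im z)^2 = cmod (p - of_real r)^2"
      by (simp add: z_def cmod_power2)
    ultimately have "(Re z)^2 + (Im z)^2 \<le> t^2"
      using dist_p by linarith
    moreover have "t * Re e < Re z" "0 < t" "(Re e)^2 + (Im e)^2 = 1"
      using near c(3) \<open>d < t\<close> d e(1) by (simp_all add: z_def cmod_power2[symmetric])
    ultimately have "0 \<le> Re e * ((Re z)^2 - (Im z)^2) + 2 * \<bar>Re z\<bar> * \<bar>Im z\<bar> * \<bar>Im e\<bar>"
      using disc_cap_quadratic_nonneg e(2) by blast
    then obtain w where "w \<in> {z, cnj z}" "cmod (w^2 - v^2) \<le> cmod (z^2 + of_real (d^2))"
      using exists_conj_norm_square_diff_le[OF e(1,2)] e(3) by auto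
    moreover have "cmod (w + of_real r) = 1"
      using \<open>w \<in> {z, cnj z}\<close> p by (auto simp: z_def)
    ultimately show ?thesis
      unfolding z_def by (intro exI[of _ "w + of_real r"]) auto
  qed
qed

lemma sic_metric_ball_le_radial:
  fixes r d :: real and w :: complex
  assumes r: "0 \<le> r" "r + d < 1" and w: "cmod w = d"
  shows "sic_metric (ball 0 1) (of_real r - w) (of_real r + w)
    \<le> sic_metric (ball 0 1) (of_real (r - d)) (of_real (r + d))"
proof (rule sic_metric_ball_le)
  have d: "0 \<le> d"
    using w by auto
  then show "of_real (r - d) \<in> ball (0::complex) 1" "of_real (r + d) \<in> ball (0::complex) 1"
    using r by (simp_all only: mem_ball_0 norm_of_real)
  show "cmod (of_real r - w - (of_real r + w)) \<le> cmod (of_real (r - d) - of_real (r + d) :: complex)"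
    using w d by (simp add: norm_mult)
  fix p :: complex
  assume p: "cmod p = 1"
  have "(of_real (r - d) - 1 :: complex) = of_real (r - d - 1)"
    "(of_real (r + d) - 1 :: complex) = of_real (r + d - 1)"
    by simp_all
  then have "cmod (of_real (r - d) - 1 :: complex) * cmod (of_real (r + d) - 1 :: complex)
      = \<bar>r - d - 1\<bar> * \<bar>r + d - 1\<bar>"
    by (simp only: norm_of_real)
  also have "\<dots> = (1 - r)^2 - d^2"
    using r d by (simp add: power2_eq_square algebra_simps)
  also have "\<dots> \<le> cmod ((p - of_real r)^2 - w^2)"
    using dist_product_sphere_ge[OF p w, of "of_real r"] r by simp
  also have "\<dots> = cmod (of_real r - w - p) * cmod (of_real r + w - p)"
    by (rule dist_product_eq_norm_square_diff[symmetric])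
  finally show "\<exists>q. cmod q = 1 \<and> cmod (of_real (r - d) - q) * cmod (of_real (r + d) - q)
      \<le> cmod (of_real r - w - p) * cmod (of_real r + w - p)"
    by (intro exI[of _ 1]) simp
qed

lemma sic_metric_ball_tangential_le:
  fixes r d :: real and w :: complex
  assumes r: "0 \<le> r" "r + d < 1" and w: "cmod w = d"
  shows "sic_metric (ball 0 1) (of_real r - \<i> * of_real d) (of_real r + \<i> * of_real d)
    \<le> sic_metric (ball 0 1) (of_real r - w) (of_real r + w)"
proof (rule sic_metric_ball_le)
  have d: "0 \<le> d"
    using w by auto
  show "of_real r - w \<in> ball (0::complex) 1" "of_real r + w \<in> ball (0::complex) 1"
    using norm_triangle_ineq4[of "of_real r" w] norm_triangle_ineq[of "of_real r" w] r w by auto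
  show "cmod (of_real r - \<i> * of_real d - (of_real r + \<i> * of_real d)) \<le> cmod (of_real r - w - (of_real r + w))"
    using w d by (simp add: norm_mult)
  fix p :: complex
  assume p: "cmod p = 1"
  then obtain q where q: "cmod q = 1"
    and le: "cmod ((q - of_real r)^2 - w^2) \<le> cmod ((p - of_real r)^2 + of_real (d^2))"
    using exists_sphere_norm_square_diff_le[OF r w] by blast
  have "cmod (of_real r - w - q) * cmod (of_real r + w - q) \<le>
      cmod (of_real r - \<i> * of_real d - p) * cmod (of_real r + \<i> * of_real d - p)"
    using le unfolding dist_product_eq_norm_square_diff by (simp add: power_mult_distrib)
  then show "\<exists>q. cmod q = 1 \<and> cmod (of_real r - w - q) * cmod (of_real r + w - q)
      \<le> cmod (of_real r - \<i> * of_real d - p) * cmod (of_real r + \<i> * of_real d - p)"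
    using q by blast
qed

theorem lemma3p5:
  fixes x y :: complex
  assumes "x \<in> ball 0 1" and "y \<in> ball 0 1"
  defines "\<xi> \<equiv> (if x + y \<noteq> 0 then (x + y) / of_real (cmod (x + y)) else 1)"
  defines "\<zeta> \<equiv> \<i> * \<xi>"
  defines "x' \<equiv> (x + y) / 2 - of_real (cmod (x - y) / 2) * \<xi>"
  defines "y' \<equiv> (x + y) / 2 + of_real (cmod (x - y) / 2) * \<xi>"
  defines "x'' \<equiv> (x + y) / 2 - of_real (cmod (x - y) / 2) * \<zeta>"
  defines "y'' \<equiv> (x + y) / 2 + of_real (cmod (x - y) / 2) * \<zeta>"
  assumes "x' \<in> ball 0 1" and "y' \<in> ball 0 1"
  shows "x'' \<in> ball 0 1 \<and> y'' \<in> ball 0 1 \<and>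
         sic_metric (ball 0 1) x'' y'' \<le> sic_metric (ball 0 1) x y \<and>
         sic_metric (ball 0 1) x y \<le> sic_metric (ball 0 1) x' y'"
proof -
  define r d where "r = cmod (x + y) / 2" and "d = cmod (x - y) / 2"
  define w where "w = cnj \<xi> * (y - x) / 2"
  have \<xi>: "cmod \<xi> = 1"
    by (simp add: \<xi>_def norm_divide)
  then have "\<xi> * cnj \<xi> = 1"
    using complex_norm_square[of \<xi>] by simp
  have centre: "(x + y) / 2 = \<xi> * of_real r"
  proof (cases "x + y = 0")
    case True
    then show ?thesis
      by (simp add: r_def)
  qed (simp add: \<xi>_def r_def)
  have "\<xi> * w = (y - x) / 2"
    using \<open>\<xi> * cnj \<xi> = 1\<close> by (simp add: w_def mult.assoc[symmetric])
  then have xy: "x = \<xi> * (of_real r - w)" "y = \<xi> * (of_real r + w)"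
    unfolding distrib_left right_diff_distrib centre[symmetric] by (simp_all add: field_simps)
  have x'y': "x' = \<xi> * of_real (r - d)" "y' = \<xi> * of_real (r + d)"
    unfolding x'_def y'_def centre d_def by (simp_all add: algebra_simps)
  have x''y'': "x'' = \<xi> * (of_real r - \<i> * of_real d)" "y'' = \<xi> * (of_real r + \<i> * of_real d)"
    unfolding x''_def y''_def \<zeta>_def centre d_def by (simp_all add: algebra_simps)
  have w: "cmod w = d"
    using \<xi> by (simp add: w_def d_def norm_mult norm_divide norm_minus_commute)
  have "0 \<le> r" "0 \<le> d"
    by (simp_all add: r_def d_def)
  then have "cmod y' = r + d"
    unfolding x'y' using \<xi> by (simp add: norm_mult del: of_real_add)
  then have r: "0 \<le> r" "r + d < 1"
    using \<open>0 \<le> r\<close> \<open>y' \<in> ball 0 1\<close> by simp_all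
  have "cmod (of_real r - \<i> * of_real d) \<le> r + d" "cmod (of_real r + \<i> * of_real d) \<le> r + d"
    using norm_triangle_ineq4[of "of_real r" "\<i> * of_real d"]
      norm_triangle_ineq[of "of_real r" "\<i> * of_real d"] r w by (auto simp: norm_mult)
  then have "x'' \<in> ball 0 1" "y'' \<in> ball 0 1"
    using r \<xi> by (simp_all add: x''y'' norm_mult)
  moreover have "sic_metric (ball 0 1) x'' y'' \<le> sic_metric (ball 0 1) x y"
    unfolding xy x''y'' sic_metric_ball_rotate[OF \<xi>] by (rule sic_metric_ball_tangential_le[OF r w])
  moreover have "sic_metric (ball 0 1) x y \<le> sic_metric (ball 0 1) x' y'"
    unfolding xy x'y' sic_metric_ball_rotate[OF \<xi>] by (rule sic_metric_ball_le_radial[OF r w])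
  ultimately show ?thesis
    by blast
qed

end
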